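(* In the SDR $(i_\hbar,p_\hbar,K_\hbar)$ obtained from $(i,p,K)$ by the homological perturbation lemma with perturbation $\delta=-\mathrm{i}\hbar\Delta$, the chain homotopy is given as follows: for $O\in S\mathcal F^*$ homogeneous of degree $n\ge1$ in the $\mathcal F''$-coordinates, $$K_\hbar O=\sum_{j=0}^{\lfloor (n-1)/2\rfloor}\frac{(\mathrm{i}\hbar)^j}{n(n-2)\cdots(n-2j)}\,\hat\kappa\,\eta^jO,$$ and $K_\hbar O=0$ if $O$ does not depend on $x''$. Equivalently, $K_\hbar=\hat\kappa\nu(1-\mathrm{i}\hbar\,\eta\nu)^{-1}=\sum_{j\ge0}\hat\kappa\nu(\mathrm{i}\hbar\,\eta\nu)^j$.
   Context: Standing setting. Let $\mathcal F$ be a finite-dimensional $\mathbb Z$-graded real vector space with a degree $+1$ differential $d$ and a nondegenerate constant pairing $\omega$ of degree $-1$ compatible with $d$. Assume a splitting $\mathcal F=\mathcal F'\oplus\mathcal F''$ into $d$-invariant $\omega$-orthogonal subspaces with $\omega=\omega'+\omega''$ and $(\mathcal F'',d'')$ acyclic. Let $\iota,\pi$ be the inclusion of and projection to $\mathcal F'$, and fix a degree $-1$ map $\kappa$ with $d\kappa+\kappa d=\mathrm{id}-\iota\pi$, $\kappa^2=0$, $\kappa\iota=0$, $\pi\kappa=0$, $\omega(x,\kappa y)=\pm\omega(\kappa x,y)$. Write $x=x'+x''$. BV Laplacian on $S\mathcal F^*$: $\Delta=\frac12(\omega^{-1})^{ij}\partial_{x^i}\partial_{x^j}$. $S_0(x)=\frac12\omega(x,dx)$,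 $Q_0=\{S_0,-\}$ (Poisson bracket induced by $\omega$), $Q_0'$ similarly on $\mathcal F'$. $i=\pi^*$, $p=\iota^*$. $\hat\kappa$ is the derivation of $S\mathcal F^*$ extending $\kappa^\vee$. With $S\mathcal F^*=\bigoplus_{N\ge0}S\mathcal F'^*\otimes S^N\mathcal F''^*$, $\nu$ multiplies the $N$-th summand by $1/N$ ($N\ge1$) and is $0$ for $N=0$. $K=\nu\hat\kappa$; $(i,p,K)$ is an SDR of $(S\mathcal F^*,Q_0)$ onto $(S\mathcal F'^*,Q_0')$. $h=\omega''^{-1}\kappa^\vee\in S^2\mathcal F''$ and $\eta=h^{ab}\partial_{x''^a}\partial_{x''^b}$. Homological perturbation lemma: for SDR data $(i,p,K)$ of $(V,d)$ onto $(V',d')$ and a perturbation $\delta$ with $(d+\delta)^2=0$, the perturbed chain homotopy is $\tilde K=\sum_{k\ge0}K(-\delta K)^k$ (with $\tilde i,\tilde p,\tilde d'$ given by the analogous standard formulas). *)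

theory Defs
  imports "HOL-Analysis.Analysis"
begin

text \<open>
The finite-dimensional graded space F is presented with a homogeneous
basis e_i indexed by a finite linearly ordered type 'i, adapted to the splitting
F = F' (+) F'' (F'' is spanned by e_i with i in I2).  deg i is the degree of e_i.
Vectors of F are real^'i, linear maps are matrices real^'i^'i acting by *v.
The coordinate function x^i (dual basis) has degree - deg i, parity = parity of deg i.

The graded-symmetric algebra S F^* (complex coefficients, since i*hbar appears) is
represented by coefficient functions on exponent vectors m :: 'i => nat, where
m stands for the ordered monomial  x^m = prod_{i ascending} (x^i)^(m i),
and odd coordinates occur with exponent at most 1.
\<close>

definition adm :: "('i \<Rightarrow> int) \<Rightarrow> ('i \<Rightarrow> nat) \<Rightarrow> bool" where
  "adm deg m \<longleftrightarrow> (\<forall>i. odd (deg i) \<longrightarrow> m i \<le> 1)"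

definition spoly :: "('i \<Rightarrow> int) \<Rightarrow> (('i \<Rightarrow> nat) \<Rightarrow> complex) \<Rightarrow> bool" where
  "spoly deg P \<longleftrightarrow> finite {m. P m \<noteq> 0} \<and> (\<forall>m. P m \<noteq> 0 \<longrightarrow> adm deg m)"

text \<open>Koszul sign for moving the generator x^a past the generators x^j, j < a, of x^m.\<close>
definition ksign :: "('i::{finite,linorder} \<Rightarrow> int) \<Rightarrow> 'i \<Rightarrow> ('i \<Rightarrow> nat) \<Rightarrow> complex" where
  "ksign deg a m =
     (if odd (deg a) then (-1) ^ (\<Sum>j\<in>{j. j < a \<and> odd (deg j)}. m j) else 1)"

text \<open>Left partial derivative with respect to x^a.\<close>
definition sderiv :: "('i::{finite,linorder} \<Rightarrow> int) \<Rightarrow> 'i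
     \<Rightarrow> (('i \<Rightarrow> nat) \<Rightarrow> complex) \<Rightarrow> (('i \<Rightarrow> nat) \<Rightarrow> complex)" where
  "sderiv deg a P = (\<lambda>m. if adm deg (m(a := m a + 1))
       then of_nat (m a + 1) * ksign deg a m * P (m(a := m a + 1)) else 0)"

text \<open>Left multiplication by the generator x^b.\<close>
definition xmul :: "('i::{finite,linorder} \<Rightarrow> int) \<Rightarrow> 'i
     \<Rightarrow> (('i \<Rightarrow> nat) \<Rightarrow> complex) \<Rightarrow> (('i \<Rightarrow> nat) \<Rightarrow> complex)" where
  "xmul deg b P = (\<lambda>m. if adm deg m \<and> 1 \<le> m b
       then ksign deg b (m(b := m b - 1)) * P (m(b := m b - 1)) else 0)"

text \<open>Scalar pairing omega(x,y) = x . (W *v y); its inverse has entries matrix_inv W.\<close>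
definition omega :: "real^('i::{finite,linorder})^('i::{finite,linorder}) \<Rightarrow> real^('i::{finite,linorder}) \<Rightarrow> real^('i::{finite,linorder}) \<Rightarrow> real" where
  "omega W x y = x \<bullet> (W *v y)"

definition ebasis :: "'i::{finite,linorder} \<Rightarrow> real^('i::{finite,linorder})" where
  "ebasis i = axis i 1"

definition bvlap :: "('i::{finite,linorder} \<Rightarrow> int) \<Rightarrow> real^('i::{finite,linorder})^('i::{finite,linorder})
     \<Rightarrow> (('i \<Rightarrow> nat) \<Rightarrow> complex) \<Rightarrow> (('i \<Rightarrow> nat) \<Rightarrow> complex)" where
  "bvlap deg W P = (\<lambda>m. (1/2) * (\<Sum>i\<in>UNIV. \<Sum>j\<in>UNIV.
       of_real (matrix_inv W $ i $ j) * sderiv deg i (sderiv deg j P) m))"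

text \<open>kappa-hat: the derivation extending kappa^vee, where kappa^vee x^a = sum_b kappa_ab x^b
  (kappa acts by Kk *v); explicitly kappa-hat = sum_a (kappa^vee x^a) d_a.\<close>
definition kappa_hat :: "('i::{finite,linorder} \<Rightarrow> int) \<Rightarrow> real^('i::{finite,linorder})^('i::{finite,linorder})
     \<Rightarrow> (('i \<Rightarrow> nat) \<Rightarrow> complex) \<Rightarrow> (('i \<Rightarrow> nat) \<Rightarrow> complex)" where
  "kappa_hat deg Kk P = (\<lambda>m. \<Sum>a\<in>UNIV. \<Sum>b\<in>UNIV.
       of_real (Kk $ a $ b) * xmul deg b (sderiv deg a P) m)"

definition Ndeg :: "'i set \<Rightarrow> ('i \<Rightarrow> nat) \<Rightarrow> nat" where
  "Ndeg I2 m = (\<Sum>i\<in>I2. m i)"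

definition nu :: "'i set \<Rightarrow> (('i \<Rightarrow> nat) \<Rightarrow> complex) \<Rightarrow> (('i \<Rightarrow> nat) \<Rightarrow> complex)" where
  "nu I2 P = (\<lambda>m. if Ndeg I2 m = 0 then 0 else P m / of_nat (Ndeg I2 m))"

definition homN :: "'i set \<Rightarrow> nat \<Rightarrow> (('i \<Rightarrow> nat) \<Rightarrow> complex) \<Rightarrow> bool" where
  "homN I2 n P \<longleftrightarrow> (\<forall>m. P m \<noteq> 0 \<longrightarrow> Ndeg I2 m = n)"

text \<open>h = omega''^-1 kappa^vee in S^2 F'': as a map F''^* -> F'', x^b |-> sum_a h^{ab} e_a.
  (By omega-orthogonality of the splitting, omega''^-1 is the I2-block of matrix_inv W.)\<close>
definition hmat :: "real^('i::{finite,linorder})^('i::{finite,linorder}) \<Rightarrow> real^('i::{finite,linorder})^('i::{finite,linorder}) \<Rightarrow> 'i set \<Rightarrow> 'i \<Rightarrow> 'i \<Rightarrow> real" where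
  "hmat W Kk I2 a b = (\<Sum>j\<in>I2. matrix_inv W $ a $ j * Kk $ b $ j)"

definition eta :: "('i::{finite,linorder} \<Rightarrow> int) \<Rightarrow> real^('i::{finite,linorder})^('i::{finite,linorder}) \<Rightarrow> real^('i::{finite,linorder})^('i::{finite,linorder}) \<Rightarrow> 'i set
     \<Rightarrow> (('i \<Rightarrow> nat) \<Rightarrow> complex) \<Rightarrow> (('i \<Rightarrow> nat) \<Rightarrow> complex)" where
  "eta deg W Kk I2 P = (\<lambda>m. \<Sum>a\<in>I2. \<Sum>b\<in>I2.
       of_real (hmat W Kk I2 a b) * sderiv deg a (sderiv deg b P) m)"

definition pert_homotopy :: "(('m \<Rightarrow> complex) \<Rightarrow> ('m \<Rightarrow> complex))
     \<Rightarrow> (('m \<Rightarrow> complex) \<Rightarrow> ('m \<Rightarrow> complex)) \<Rightarrow> ('m \<Rightarrow> complex) \<Rightarrow> ('m \<Rightarrow> complex)" where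
  "pert_homotopy K delta P =
     (\<lambda>m. \<Sum>k. K (((\<lambda>X. (\<lambda>m'. - delta (K X) m')) ^^ k) P) m)"

definition K_hbar :: "('i::{finite,linorder} \<Rightarrow> int) \<Rightarrow> real^('i::{finite,linorder})^('i::{finite,linorder}) \<Rightarrow> real^('i::{finite,linorder})^('i::{finite,linorder}) \<Rightarrow> 'i set
     \<Rightarrow> real \<Rightarrow> (('i \<Rightarrow> nat) \<Rightarrow> complex) \<Rightarrow> (('i \<Rightarrow> nat) \<Rightarrow> complex)" where
  "K_hbar deg W Kk I2 hbar =
     pert_homotopy (\<lambda>X. nu I2 (kappa_hat deg Kk X))
                   (\<lambda>X m. - (\<i> * of_real hbar) * bvlap deg W X m)"

end

theory Submission
  imports Defs
begin

(* The perturbed homotopy is the series of the terms nu kappa-hat (i hbar Delta nu kappa-hat)^k.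
   Since kappa-hat is an odd derivation whose commutator with d/dx^i is given by kappa, one finds
   Delta kappa-hat + kappa-hat Delta = eta, and kappa-hat^2 = 0 then gives
   kappa-hat Delta kappa-hat = kappa-hat eta.  As kappa-hat preserves and eta lowers the degree in
   the F''-coordinates by 2, while nu divides by that degree, on O homogeneous of degree n the k-th
   term is (i hbar)^k / (n (n-2) ... (n-2k)) kappa-hat eta^k O, which vanishes for 2k >= n.
   The operators kappa-hat nu (i hbar eta nu)^k produce the same terms on homogeneous elements,
   so by linearity the two series agree on all polynomials. *)

definition parity_sign :: "('i \<Rightarrow> int) \<Rightarrow> 'i \<Rightarrow> 'i \<Rightarrow> complex" where
  "parity_sign deg a b = (if odd (deg a) \<and> odd (deg b) then -1 else 1)"

definition grade_sign :: "('i \<Rightarrow> int) \<Rightarrow> 'i \<Rightarrow> complex" where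
  "grade_sign deg a = (if odd (deg a) then -1 else 1)"

definition order_sign :: "('i::linorder \<Rightarrow> int) \<Rightarrow> 'i \<Rightarrow> 'i \<Rightarrow> complex" where
  "order_sign deg b a = (if b < a \<and> odd (deg b) \<and> odd (deg a) then -1 else 1)"

lemma order_sign_square: "order_sign deg b a * order_sign deg b a = 1"
  unfolding order_sign_def by simp

lemma order_sign_swap: "a \<noteq> b \<Longrightarrow> order_sign deg a b = parity_sign deg a b * order_sign deg b a"
  unfolding order_sign_def parity_sign_def by auto

lemma ksign_square: "ksign deg a m * ksign deg a m = 1"
  unfolding ksign_def by (simp flip: power_mult_distrib)

lemma ksign_fun_upd_self: "ksign deg a (m(a := k)) = ksign deg a m"
  unfolding ksign_def by (auto intro!: sum.cong arg_cong[where f = "\<lambda>x. (-1) ^ x"])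

lemma ksign_fun_upd_incr:
  "ksign deg a (m(b := m b + 1)) = order_sign deg b a * ksign deg a m"
proof -
  let ?S = "{j. j < a \<and> odd (deg j)}"
  have "(\<Sum>j\<in>?S. (m(b := m b + 1)) j) = (\<Sum>j\<in>?S. m j + (if j = b then 1 else 0))"
    by (rule sum.cong) auto
  also have "\<dots> = (\<Sum>j\<in>?S. m j) + (if b \<in> ?S then 1 else 0)"
    by (simp add: sum.distrib)
  finally show ?thesis
    unfolding ksign_def order_sign_def by (auto simp del: fun_upd_apply)
qed

lemma ksign_fun_upd_decr:
  assumes "1 \<le> m b"
  shows "ksign deg a (m(b := m b - 1)) = order_sign deg b a * ksign deg a m"
proof -
  have "m = (m(b := m b - 1))(b := (m(b := m b - 1)) b + 1)"
    using assms by auto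
  then have "ksign deg a m = order_sign deg b a * ksign deg a (m(b := m b - 1))"
    by (metis ksign_fun_upd_incr)
  then show ?thesis
    by (metis order_sign_square mult.assoc mult_1)
qed

lemma adm_mono: "adm deg m' \<Longrightarrow> (\<And>i. m i \<le> m' i) \<Longrightarrow> adm deg m"
  unfolding adm_def using le_trans by blast

lemma sderiv_commute:
  "sderiv deg a (sderiv deg b P) m = parity_sign deg a b * sderiv deg b (sderiv deg a P) m"
proof (cases "a = b")
  case True
  then show ?thesis
    by (cases "odd (deg a)") (auto simp: parity_sign_def sderiv_def adm_def)
next
  case ab: False
  define mab where "mab = m(a := m a + 1, b := m b + 1)"
  have e1: "(m(a := m a + 1))(b := (m(a := m a + 1)) b + 1) = mab"
    using ab by (simp add: mab_def)
  have e2: "(m(b := m b + 1))(a := (m(b := m b + 1)) a + 1) = mab"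
    using ab by (simp add: mab_def fun_upd_twist)
  show ?thesis
  proof (cases "adm deg mab")
    case False
    then show ?thesis
      unfolding sderiv_def using e1 e2 by (simp del: fun_upd_apply)
  next
    case True
    have "adm deg (m(a := m a + 1))" "adm deg (m(b := m b + 1))"
      by (rule adm_mono[OF True], simp add: mab_def)+
    then have "sderiv deg a (sderiv deg b P) m
        = of_nat (m a + 1) * ksign deg a m * (of_nat (m b + 1) * ksign deg b (m(a := m a + 1)) * P mab)"
      and "sderiv deg b (sderiv deg a P) m
        = of_nat (m b + 1) * ksign deg b m * (of_nat (m a + 1) * ksign deg a (m(b := m b + 1)) * P mab)"
      unfolding sderiv_def using True ab e1 e2
      by (simp_all del: fun_upd_apply) (simp_all add: e1 e2)
    note this[unfolded ksign_fun_upd_incr]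
    then show ?thesis
      using order_sign_swap[OF ab, of deg] by (simp add: algebra_simps)
  qed
qed

lemma sderiv_commute_fun:
  "sderiv deg a (sderiv deg b P) = (\<lambda>m. parity_sign deg a b * sderiv deg b (sderiv deg a P) m)"
  by (rule ext) (rule sderiv_commute)

lemma xmul_commute:
  "xmul deg a (xmul deg b P) m = parity_sign deg a b * xmul deg b (xmul deg a P) m"
proof (cases "a = b")
  case True
  then show ?thesis
    by (cases "odd (deg a)") (auto simp: parity_sign_def xmul_def adm_def)
next
  case ab: False
  define mab where "mab = m(a := m a - 1, b := m b - 1)"
  have e1: "(m(a := m a - 1))(b := (m(a := m a - 1)) b - 1) = mab"
    using ab by (simp add: mab_def)
  have e2: "(m(b := m b - 1))(a := (m(b := m b - 1)) a - 1) = mab"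
    using ab by (simp add: mab_def fun_upd_twist)
  have adm_a: "adm deg m \<Longrightarrow> adm deg (m(a := m a - 1))"
    and adm_b: "adm deg m \<Longrightarrow> adm deg (m(b := m b - 1))"
    by (erule adm_mono, simp)+
  show ?thesis
  proof (cases "adm deg m \<and> 1 \<le> m a \<and> 1 \<le> m b")
    case False
    then show ?thesis
      unfolding xmul_def using ab adm_a adm_b by auto
  next
    case True
    have "ksign deg b mab = ksign deg b (m(a := m a - 1))"
      unfolding e1[symmetric] by (rule ksign_fun_upd_self)
    then have "xmul deg a (xmul deg b P) m
        = ksign deg a m * (ksign deg b (m(a := m a - 1)) * P mab)"
      unfolding xmul_def using True adm_a e1 ab
      by (simp add: ksign_fun_upd_self del: fun_upd_apply) (simp add: e1 ksign_fun_upd_self)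
    moreover have "ksign deg a mab = ksign deg a (m(b := m b - 1))"
      unfolding e2[symmetric] by (rule ksign_fun_upd_self)
    then have "xmul deg b (xmul deg a P) m
        = ksign deg b m * (ksign deg a (m(b := m b - 1)) * P mab)"
      unfolding xmul_def using True adm_b e2 ab
      by (simp add: ksign_fun_upd_self del: fun_upd_apply) (simp add: e2 ksign_fun_upd_self)
    moreover have "ksign deg b (m(a := m a - 1)) = order_sign deg a b * ksign deg b m"
      and "ksign deg a (m(b := m b - 1)) = order_sign deg b a * ksign deg a m"
      by (rule ksign_fun_upd_decr, use True in simp)+
    ultimately show ?thesis
      using order_sign_swap[OF ab, of deg] by (simp only:) (simp add: algebra_simps)
  qed
qed

definition adm_support :: "('i \<Rightarrow> int) \<Rightarrow> (('i \<Rightarrow> nat) \<Rightarrow> complex) \<Rightarrow> bool" where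
  "adm_support deg P \<longleftrightarrow> (\<forall>m. P m \<noteq> 0 \<longrightarrow> adm deg m)"

lemma adm_support_sderiv: "adm_support deg (sderiv deg a P)"
  unfolding adm_support_def sderiv_def by (auto elim: adm_mono split: if_splits)

lemma sderiv_xmul_same:
  assumes "adm_support deg P"
  shows "sderiv deg a (xmul deg a P) m = P m + parity_sign deg a a * xmul deg a (sderiv deg a P) m"
proof -
  have L: "sderiv deg a (xmul deg a P) m
      = (if adm deg (m(a := m a + 1)) then of_nat (m a + 1) * P m else 0)"
    unfolding sderiv_def xmul_def by (simp add: ksign_fun_upd_self ksign_square flip: mult.assoc)
  have R: "xmul deg a (sderiv deg a P) m = (if adm deg m \<and> 1 \<le> m a then of_nat (m a) * P m else 0)"
  proof (cases "adm deg m \<and> 1 \<le> m a")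
    case True
    then have "(m(a := m a - 1))(a := (m(a := m a - 1)) a + 1) = m"
      by auto
    with True show ?thesis
      unfolding xmul_def sderiv_def
      by (simp add: ksign_fun_upd_self del: fun_upd_apply)
        (simp add: ksign_fun_upd_self ksign_square mult.left_commute)
  qed (auto simp: xmul_def)
  show ?thesis
  proof (cases "P m = 0")
    case True
    then show ?thesis by (simp add: L R)
  next
    case False
    then have "adm deg m"
      using assms unfolding adm_support_def by blast
    then show ?thesis
      unfolding L R parity_sign_def adm_def
      by (cases "odd (deg a)"; cases "m a") (auto simp: algebra_simps dest: spec[of _ a])
  qed
qed

lemma sderiv_xmul_distinct:
  assumes ab: "a \<noteq> b"
  shows "sderiv deg a (xmul deg b P) m = parity_sign deg a b * xmul deg b (sderiv deg a P) m"
proof -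
  define mab where "mab = m(a := m a + 1, b := m b - 1)"
  have e1: "(m(a := m a + 1))(b := (m(a := m a + 1)) b - 1) = mab"
    using ab by (simp add: mab_def)
  have e2: "(m(b := m b - 1))(a := (m(b := m b - 1)) a + 1) = mab"
    using ab by (simp add: mab_def fun_upd_twist)
  have adm_iff: "adm deg (m(a := m a + 1)) \<longleftrightarrow> adm deg m \<and> adm deg (m(b := m b - 1, a := m a + 1))"
    using ab unfolding adm_def by (force simp: fun_upd_twist)
  show ?thesis
  proof (cases "adm deg (m(a := m a + 1)) \<and> 1 \<le> m b")
    case False
    then show ?thesis
      unfolding sderiv_def xmul_def using ab adm_iff by auto
  next
    case True
    have "ksign deg b mab = ksign deg b (m(a := m a + 1))"
      unfolding e1[symmetric] by (rule ksign_fun_upd_self)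
    with True have "sderiv deg a (xmul deg b P) m
        = of_nat (m a + 1) * ksign deg a m * (ksign deg b (m(a := m a + 1)) * P mab)"
      unfolding sderiv_def xmul_def using e1 ab by (simp del: fun_upd_apply) (simp add: e1)
    moreover from True adm_iff have "xmul deg b (sderiv deg a P) m
        = ksign deg b m * (of_nat (m a + 1) * ksign deg a (m(b := m b - 1)) * P mab)"
      unfolding sderiv_def xmul_def using e2 ab
      by (simp del: fun_upd_apply) (simp add: e2 ksign_fun_upd_self fun_upd_twist)
    moreover have "ksign deg a (m(b := m b - 1)) = order_sign deg b a * ksign deg a m"
      by (rule ksign_fun_upd_decr, use True in simp)
    ultimately show ?thesis
      using order_sign_swap[OF ab, of deg]
      by (simp only: ksign_fun_upd_incr) (simp add: algebra_simps)
  qed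
qed

lemma sderiv_xmul:
  "adm_support deg P \<Longrightarrow> sderiv deg a (xmul deg b P) m
     = (if a = b then P m else 0) + parity_sign deg a b * xmul deg b (sderiv deg a P) m"
  by (cases "a = b") (simp_all add: sderiv_xmul_same sderiv_xmul_distinct)

lemma sderiv_sum: "sderiv deg a (\<lambda>m. \<Sum>x\<in>S. f x m) = (\<lambda>m. \<Sum>x\<in>S. sderiv deg a (f x) m)"
  unfolding sderiv_def by (rule ext) (simp add: sum_distrib_left)

lemma sderiv_add: "sderiv deg a (\<lambda>m. f m + g m) = (\<lambda>m. sderiv deg a f m + sderiv deg a g m)"
  unfolding sderiv_def by (rule ext) (simp add: algebra_simps)

lemma sderiv_mult: "sderiv deg a (\<lambda>m. c * f m) = (\<lambda>m. c * sderiv deg a f m)"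
  unfolding sderiv_def by (rule ext) (simp add: algebra_simps)

lemma xmul_sum: "xmul deg a (\<lambda>m. \<Sum>x\<in>S. f x m) = (\<lambda>m. \<Sum>x\<in>S. xmul deg a (f x) m)"
  unfolding xmul_def by (rule ext) (auto simp: sum_distrib_left)

lemma xmul_add: "xmul deg a (\<lambda>m. f m + g m) = (\<lambda>m. xmul deg a f m + xmul deg a g m)"
  unfolding xmul_def by (rule ext) (simp add: algebra_simps)

lemma xmul_mult: "xmul deg a (\<lambda>m. c * f m) = (\<lambda>m. c * xmul deg a f m)"
  unfolding xmul_def by (rule ext) (simp add: algebra_simps)

lemmas sderiv_xmul_linear = sderiv_sum sderiv_add sderiv_mult xmul_sum xmul_add xmul_mult

definition linop :: "(('m \<Rightarrow> complex) \<Rightarrow> ('m \<Rightarrow> complex)) \<Rightarrow> bool" where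
  "linop L \<longleftrightarrow> (\<forall>f g. L (\<lambda>m. f m + g m) = (\<lambda>m. L f m + L g m)) \<and>
                (\<forall>c f. L (\<lambda>m. c * f m) = (\<lambda>m. c * L f m))"

lemma linop_add: "linop L \<Longrightarrow> L (\<lambda>m. f m + g m) = (\<lambda>m. L f m + L g m)"
  unfolding linop_def by blast

lemma linop_mult: "linop L \<Longrightarrow> L (\<lambda>m. c * f m) = (\<lambda>m. c * L f m)"
  unfolding linop_def by blast

lemma linop_zero: "linop L \<Longrightarrow> L (\<lambda>m. 0) = (\<lambda>m. 0)"
  using linop_mult[of L 0 "\<lambda>m. 0"] by simp

lemma linop_diff: "linop L \<Longrightarrow> L (\<lambda>m. f m - g m) = (\<lambda>m. L f m - L g m)"
  using linop_add[of L f "\<lambda>m. (-1) * g m"] linop_mult[of L "-1" g] by simp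

lemma linop_sum:
  assumes "linop L" "finite S"
  shows "L (\<lambda>m. \<Sum>x\<in>S. f x m) = (\<lambda>m. \<Sum>x\<in>S. L (f x) m)"
  using assms(2) by induction (simp_all add: linop_zero linop_add[OF assms(1)] assms(1))

lemma linop_comp: "linop L1 \<Longrightarrow> linop L2 \<Longrightarrow> linop (\<lambda>X. L1 (L2 X))"
  unfolding linop_def by simp

lemma linop_funpow: "linop L \<Longrightarrow> linop (L ^^ k)"
  by (induction k) (auto simp: linop_def)

lemma linop_scale: "linop L \<Longrightarrow> linop (\<lambda>X m. c * L X m)"
  unfolding linop_def by (simp add: algebra_simps)

lemma linop_kappa_hat: "linop (kappa_hat deg Kk)"
  unfolding linop_def kappa_hat_def
  by (simp add: sderiv_xmul_linear distrib_left sum.distrib sum_distrib_left mult.left_commute)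

lemma linop_bvlap: "linop (bvlap deg W)"
  unfolding linop_def bvlap_def
  by (simp add: sderiv_xmul_linear distrib_left sum.distrib sum_distrib_left mult.left_commute)

lemma linop_eta: "linop (eta deg W Kk I2)"
  unfolding linop_def eta_def
  by (simp add: sderiv_xmul_linear distrib_left sum.distrib sum_distrib_left mult.left_commute)

lemma linop_nu: "linop (nu I2)"
  unfolding linop_def nu_def by (auto simp: fun_eq_iff add_divide_distrib)

lemma sderiv_kappa_hat:
  assumes k_deg: "\<forall>i j. Kk $ i $ j \<noteq> 0 \<longrightarrow> deg i + 1 = deg j"
  shows "sderiv deg i (kappa_hat deg Kk Y) m
     = (\<Sum>a\<in>UNIV. of_real (Kk $ a $ i) * sderiv deg a Y m)
       + grade_sign deg i * kappa_hat deg Kk (sderiv deg i Y) m"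
proof -
  let ?k = "\<lambda>a b. complex_of_real (Kk $ a $ b)"
  have summand: "?k a b * sderiv deg i (xmul deg b (sderiv deg a Y)) m
      = (if b = i then ?k a i * sderiv deg a Y m else 0)
        + grade_sign deg i * (?k a b * xmul deg b (sderiv deg a (sderiv deg i Y)) m)" for a b
  proof (cases "Kk $ a $ b = 0")
    case False
    then have "deg a + 1 = deg b"
      using k_deg by blast
    then have sign: "parity_sign deg i b * parity_sign deg i a = grade_sign deg i"
      unfolding parity_sign_def grade_sign_def by (auto simp flip: \<open>deg a + 1 = deg b\<close>)
    have "xmul deg b (sderiv deg i (sderiv deg a Y)) m
        = parity_sign deg i a * xmul deg b (sderiv deg a (sderiv deg i Y)) m"
      unfolding sderiv_commute_fun[of deg i a] xmul_mult ..
    then show ?thesis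
      unfolding sderiv_xmul[OF adm_support_sderiv] sign[symmetric] by (simp add: algebra_simps)
  qed auto
  have "sderiv deg i (kappa_hat deg Kk Y) m
      = (\<Sum>a\<in>UNIV. \<Sum>b\<in>UNIV. ?k a b * sderiv deg i (xmul deg b (sderiv deg a Y)) m)"
    unfolding kappa_hat_def by (simp add: sderiv_sum sderiv_mult)
  also have "\<dots> = (\<Sum>a\<in>UNIV. ?k a i * sderiv deg a Y m)
       + grade_sign deg i * kappa_hat deg Kk (sderiv deg i Y) m"
    unfolding summand kappa_hat_def by (simp add: sum.distrib sum_distrib_left)
  finally show ?thesis .
qed

lemma sum_sum_antisym_eq_0:
  fixes G :: "'a \<Rightarrow> 'b \<Rightarrow> 'a \<Rightarrow> 'b \<Rightarrow> 'c::{idom,ring_char_0}"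
  assumes "finite A" "finite B" and antisym: "\<And>a b c d. G c d a b = - G a b c d"
  shows "(\<Sum>a\<in>A. \<Sum>b\<in>B. \<Sum>c\<in>A. \<Sum>d\<in>B. G a b c d) = 0"
proof -
  define S where "S = (\<Sum>p\<in>A \<times> B. \<Sum>q\<in>A \<times> B. G (fst p) (snd p) (fst q) (snd q))"
  have "S = (\<Sum>q\<in>A \<times> B. \<Sum>p\<in>A \<times> B. G (fst p) (snd p) (fst q) (snd q))"
    unfolding S_def by (rule sum.swap)
  also have "\<dots> = (\<Sum>q\<in>A \<times> B. \<Sum>p\<in>A \<times> B. - G (fst q) (snd q) (fst p) (snd p))"
    by (intro sum.cong refl) (rule antisym)
  also have "\<dots> = - S"
    unfolding S_def by (simp add: sum_negf)
  finally have "S = 0"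
    by simp
  then show ?thesis
    by (simp add: S_def sum.cartesian_product')
qed

lemma sum_matrix_square_eq_0:
  fixes K :: "real^'n^'n"
  assumes "K ** K = 0"
  shows "(\<Sum>a\<in>UNIV. \<Sum>b\<in>UNIV. \<Sum>c\<in>UNIV. of_real (K $ a $ b) * of_real (K $ c $ a) * f b c) = (0::complex)"
proof -
  have "(\<Sum>a\<in>UNIV. \<Sum>b\<in>UNIV. \<Sum>c\<in>UNIV. of_real (K $ a $ b) * of_real (K $ c $ a) * f b c)
      = (\<Sum>b\<in>UNIV. \<Sum>c\<in>UNIV. \<Sum>a\<in>UNIV. of_real (K $ c $ a) * of_real (K $ a $ b) * f b c)"
    by (subst sum.swap, rule sum.cong[OF refl], subst sum.swap) (simp add: mult_ac)
  also have "\<dots> = (\<Sum>b\<in>UNIV. \<Sum>c\<in>UNIV. of_real ((K ** K) $ c $ b) * f b c)"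
    by (simp add: matrix_matrix_mult_def sum_distrib_right)
  finally show ?thesis
    using assms by simp
qed

lemma kappa_hat_square:
  assumes k_deg: "\<forall>i j. Kk $ i $ j \<noteq> 0 \<longrightarrow> deg i + 1 = deg j"
    and k_sq: "Kk ** Kk = 0"
  shows "kappa_hat deg Kk (kappa_hat deg Kk Y) m = 0"
proof -
  let ?k = "\<lambda>a b. complex_of_real (Kk $ a $ b)"
  define G where "G a b c d = ?k a b * ?k c d * grade_sign deg a
      * xmul deg b (xmul deg d (sderiv deg c (sderiv deg a Y))) m" for a b c d
  have "sderiv deg a (kappa_hat deg Kk Y) = (\<lambda>m. (\<Sum>c\<in>UNIV. ?k c a * sderiv deg c Y m)
      + grade_sign deg a * kappa_hat deg Kk (sderiv deg a Y) m)" for a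
    by (rule ext) (rule sderiv_kappa_hat[OF k_deg])
  then have "kappa_hat deg Kk (kappa_hat deg Kk Y) m = (\<Sum>a\<in>UNIV. \<Sum>b\<in>UNIV. ?k a b * xmul deg b
      (\<lambda>m. (\<Sum>c\<in>UNIV. ?k c a * sderiv deg c Y m) + grade_sign deg a * kappa_hat deg Kk (sderiv deg a Y) m) m)"
    unfolding kappa_hat_def[of deg Kk "kappa_hat deg Kk Y"] by simp
  also have "\<dots> = (\<Sum>a\<in>UNIV. \<Sum>b\<in>UNIV. \<Sum>c\<in>UNIV. ?k a b * ?k c a * xmul deg b (sderiv deg c Y) m)
        + (\<Sum>a\<in>UNIV. \<Sum>b\<in>UNIV. \<Sum>c\<in>UNIV. \<Sum>d\<in>UNIV. G a b c d)"
    unfolding G_def kappa_hat_def[of deg Kk "sderiv deg _ Y"]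
    by (simp only: sderiv_xmul_linear) (simp add: sum.distrib sum_distrib_left algebra_simps)
  also have "(\<Sum>a\<in>UNIV. \<Sum>b\<in>UNIV. \<Sum>c\<in>UNIV. ?k a b * ?k c a * xmul deg b (sderiv deg c Y) m) = 0"
    by (rule sum_matrix_square_eq_0[OF k_sq])
  also have "(\<Sum>a\<in>UNIV. \<Sum>b\<in>UNIV. \<Sum>c\<in>UNIV. \<Sum>d\<in>UNIV. G a b c d) = 0"
  proof (rule sum_sum_antisym_eq_0)
    fix a b c d
    show "G c d a b = - G a b c d"
    proof (cases "Kk $ a $ b = 0 \<or> Kk $ c $ d = 0")
      case False
      then have "deg a + 1 = deg b" "deg c + 1 = deg d"
        using k_deg by blast+
      then have sign: "grade_sign deg c * parity_sign deg d b * parity_sign deg a c = - grade_sign deg a"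
        unfolding grade_sign_def parity_sign_def by (auto simp flip: \<open>deg a + 1 = deg b\<close> \<open>deg c + 1 = deg d\<close>)
      have "xmul deg d (xmul deg b (sderiv deg a (sderiv deg c Y))) m
          = parity_sign deg d b * parity_sign deg a c * xmul deg b (xmul deg d (sderiv deg c (sderiv deg a Y))) m"
        by (simp add: xmul_commute[of deg d b] sderiv_commute_fun[of deg a c] xmul_mult)
      then have "G c d a b = (grade_sign deg c * parity_sign deg d b * parity_sign deg a c)
          * (?k a b * ?k c d * xmul deg b (xmul deg d (sderiv deg c (sderiv deg a Y))) m)"
        unfolding G_def by (simp add: mult_ac)
      then show ?thesis
        unfolding sign G_def by simp
    qed (auto simp: G_def)
  qed simp_all
  finally show ?thesis
    by simp
qed

lemma matrix_inv_mult:
  fixes W :: "'a::semiring_1^'n^'n"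
  assumes "invertible W"
  shows "W ** matrix_inv W = mat 1" and "matrix_inv W ** W = mat 1"
proof -
  have "\<exists>A'. W ** A' = mat 1 \<and> A' ** W = mat 1"
    using assms unfolding invertible_def by blast
  then have "W ** matrix_inv W = mat 1 \<and> matrix_inv W ** W = mat 1"
    unfolding matrix_inv_def by (rule someI_ex)
  then show "W ** matrix_inv W = mat 1" and "matrix_inv W ** W = mat 1"
    by auto
qed

lemma matrix_inv_unique:
  fixes W V :: "'a::semiring_1^'n^'n"
  assumes "invertible W" and "W ** V = mat 1"
  shows "V = matrix_inv W"
proof -
  have "V = (matrix_inv W ** W) ** V"
    by (simp add: matrix_inv_mult(2)[OF assms(1)])
  also have "\<dots> = matrix_inv W"
    by (simp add: matrix_mul_assoc[symmetric] assms(2))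
  finally show ?thesis .
qed

lemma transpose_matrix_inv_symmetric:
  fixes W :: "'a::comm_semiring_1^'n^'n"
  assumes "invertible W" and "transpose W = W"
  shows "transpose (matrix_inv W) = matrix_inv W"
proof (rule matrix_inv_unique[OF assms(1)])
  show "W ** transpose (matrix_inv W) = mat 1"
    using arg_cong[OF matrix_inv_mult(2)[OF assms(1)], of transpose] assms(2)
    by (simp add: matrix_transpose_mul)
qed

text \<open>If the support of W is compatible with a sign function e, then W is fixed by
  conjugation with the diagonal matrix of e, scaled by c; hence so is its inverse.\<close>
lemma matrix_inv_sign_pattern:
  fixes W :: "'a::idom^'n^'n" and e :: "'n \<Rightarrow> 'a"
  assumes "invertible W" and e: "\<And>i. e i * e i = 1" and c: "c * c = 1"
    and W: "\<And>i j. W $ i $ j \<noteq> 0 \<Longrightarrow> e i * e j = c"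
    and "matrix_inv W $ i $ j \<noteq> 0"
  shows "e i * e j = c"
proof -
  define V where "V = matrix_inv W"
  define V' where "V' = (\<chi> i j. c * e i * e j * V $ i $ j)"
  have summand: "W $ i $ j * (c * e j * e k * V $ j $ k) = e i * e k * (W $ i $ j * V $ j $ k)" for i j k
  proof (cases "W $ i $ j = 0")
    case False
    have "c * e j = e i * e j * e j"
      using W[OF False] by simp
    also have "\<dots> = e i"
      using e[of j] by (simp add: mult.assoc)
    finally have ce: "c * e j = e i" .
    show ?thesis
      unfolding ce by (simp only: mult_ac)
  qed simp
  have entry: "(W ** V') $ i $ k = e i * e k * (W ** V) $ i $ k" for i k
    by (simp add: matrix_matrix_mult_def V'_def summand sum_distrib_left)
  have "W ** V' = mat 1"
    using e by (simp add: vec_eq_iff entry V_def matrix_inv_mult(1)[OF assms(1)] mat_def)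
  then have "V' = V"
    unfolding V_def by (rule matrix_inv_unique[OF assms(1)])
  then have "V' $ i $ j = V $ i $ j"
    by simp
  then have "(c * (e i * e j)) * V $ i $ j = 1 * V $ i $ j"
    by (simp add: V'_def mult.assoc)
  then have "c * (e i * e j) = 1"
    using assms(5) unfolding V_def by (rule mult_right_cancel[THEN iffD1, rotated])
  then have "c * (c * (e i * e j)) = c"
    by simp
  then show ?thesis
    using c by (simp flip: mult.assoc)
qed

lemma Ndeg_fun_upd_incr:
  fixes I2 :: "'i::finite set"
  assumes "a \<in> I2"
  shows "Ndeg I2 (m(a := m a + 1)) = Ndeg I2 m + 1"
proof -
  have "(\<Sum>j\<in>I2. (m(a := m a + 1)) j) = (\<Sum>j\<in>I2. m j + (if j = a then 1 else 0))"
    by (rule sum.cong) auto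
  then show ?thesis
    using assms by (simp add: Ndeg_def sum.distrib)
qed

lemma Ndeg_fun_upd_decr:
  fixes I2 :: "'i::finite set"
  assumes "b \<in> I2" and "1 \<le> m b"
  shows "Ndeg I2 (m(b := m b - 1)) + 1 = Ndeg I2 m"
proof -
  have "m = (m(b := m b - 1))(b := (m(b := m b - 1)) b + 1)"
    using assms(2) by auto
  then show ?thesis
    by (metis Ndeg_fun_upd_incr[OF assms(1)])
qed

lemma sderiv_nonzero_imp: "sderiv deg a Y m \<noteq> 0 \<Longrightarrow> Y (m(a := m a + 1)) \<noteq> 0"
  unfolding sderiv_def by (auto simp del: fun_upd_apply split: if_splits)

lemma xmul_nonzero_imp: "xmul deg b Y m \<noteq> 0 \<Longrightarrow> 1 \<le> m b \<and> Y (m(b := m b - 1)) \<noteq> 0"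
  unfolding xmul_def by (auto simp del: fun_upd_apply split: if_splits)

lemma homN_eta: "homN I2 n Y \<Longrightarrow> homN I2 (n - 2) (eta deg W Kk I2 Y)"
  unfolding homN_def
proof (intro allI impI)
  fix m
  assume hom: "\<forall>m. Y m \<noteq> 0 \<longrightarrow> Ndeg I2 m = n" and "eta deg W Kk I2 Y m \<noteq> 0"
  then obtain a b where ab: "a \<in> I2" "b \<in> I2" and nz: "sderiv deg a (sderiv deg b Y) m \<noteq> 0"
    unfolding eta_def by (metis (lifting) sum.neutral mult_zero_right)
  have "Y ((m(a := m a + 1))(b := (m(a := m a + 1)) b + 1)) \<noteq> 0"
    by (rule sderiv_nonzero_imp[OF sderiv_nonzero_imp[OF nz]])
  then have "Ndeg I2 ((m(a := m a + 1))(b := (m(a := m a + 1)) b + 1)) = n"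
    using hom by blast
  then show "Ndeg I2 m = n - 2"
    using Ndeg_fun_upd_incr[OF ab(2), of "m(a := m a + 1)"] Ndeg_fun_upd_incr[OF ab(1), of m] by simp
qed

lemma homN_eta_funpow: "homN I2 n P \<Longrightarrow> homN I2 (n - 2 * k) ((eta deg W Kk I2 ^^ k) P)"
  by (induction k) (auto dest: homN_eta[where deg = deg and W = W and Kk = Kk] simp: diff_diff_add)

lemma homN_scale: "homN I2 n Y \<Longrightarrow> homN I2 n (\<lambda>m. c * Y m)"
  unfolding homN_def by auto

lemma nu_homN: "homN I2 n Y \<Longrightarrow> nu I2 Y = (\<lambda>m. Y m / of_nat n)"
  unfolding homN_def nu_def by (rule ext) auto

lemma funpow_eta_nu_homN:
  assumes "homN I2 n P"
  shows "((\<lambda>X m. c * eta deg W Kk I2 (nu I2 X) m) ^^ k) P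
       = (\<lambda>m. c ^ k / (\<Prod>l<k. of_nat (n - 2 * l)) * (eta deg W Kk I2 ^^ k) P m)"
proof (induction k)
  case (Suc k)
  let ?H = "\<lambda>X m. c * eta deg W Kk I2 (nu I2 X) m"
  let ?Q = "(eta deg W Kk I2 ^^ k) P"
  let ?e = "c ^ k / (\<Prod>l<k. of_nat (n - 2 * l))"
  have "nu I2 (\<lambda>m. ?e * ?Q m) = (\<lambda>m. (?e / of_nat (n - 2 * k)) * ?Q m)"
    unfolding nu_homN[OF homN_scale[OF homN_eta_funpow[OF assms]]] by simp
  then have "(?H ^^ Suc k) P = (\<lambda>m. c * ((?e / of_nat (n - 2 * k)) * eta deg W Kk I2 ?Q m))"
    by (simp only: funpow.simps o_apply Suc.IH linop_mult[OF linop_eta])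
  then show ?case
    by (simp add: prod.lessThan_Suc mult_ac)
qed simp

lemma kappa_hat_nu_funpow_homN:
  assumes "homN I2 n P"
  shows "kappa_hat deg Kk (nu I2 (((\<lambda>X m. c * eta deg W Kk I2 (nu I2 X) m) ^^ k) P))
       = (\<lambda>m. c ^ k / (\<Prod>l\<le>k. of_nat (n - 2 * l)) * kappa_hat deg Kk ((eta deg W Kk I2 ^^ k) P) m)"
proof -
  let ?Q = "(eta deg W Kk I2 ^^ k) P"
  let ?e = "c ^ k / (\<Prod>l<k. of_nat (n - 2 * l))"
  have "nu I2 (\<lambda>m. ?e * ?Q m) = (\<lambda>m. (?e / of_nat (n - 2 * k)) * ?Q m)"
    unfolding nu_homN[OF homN_scale[OF homN_eta_funpow[OF assms]]] by simp
  then have "kappa_hat deg Kk (nu I2 (((\<lambda>X m. c * eta deg W Kk I2 (nu I2 X) m) ^^ k) P))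
      = (\<lambda>m. (?e / of_nat (n - 2 * k)) * kappa_hat deg Kk ?Q m)"
    by (simp only: funpow_eta_nu_homN[OF assms] linop_mult[OF linop_kappa_hat])
  then show ?thesis
    by (simp flip: lessThan_Suc_atMost add: prod.lessThan_Suc)
qed

lemma linop_eq_if_eq_on_homN:
  assumes "linop L1" and "linop L2" and eq: "\<And>n Q. homN I2 n Q \<Longrightarrow> L1 Q = L2 Q"
    and fin: "finite {m. P m \<noteq> 0}"
  shows "L1 P = L2 P"
proof -
  define S where "S = Ndeg I2 ` {m. P m \<noteq> 0}"
  define part where "part d = (\<lambda>m. if Ndeg I2 m = d then P m else 0)" for d
  have "finite S"
    using fin unfolding S_def by simp
  have "homN I2 d (part d)" for d
    unfolding homN_def part_def by simp
  have "P = (\<lambda>m. \<Sum>d\<in>S. part d m)"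
  proof
    fix m
    show "P m = (\<Sum>d\<in>S. part d m)"
      using \<open>finite S\<close> by (cases "P m = 0") (auto simp: part_def S_def)
  qed
  then show ?thesis
    using linop_sum[OF assms(1) \<open>finite S\<close>] linop_sum[OF assms(2) \<open>finite S\<close>] eq[OF \<open>homN I2 _ (part _)\<close>]
    by simp
qed

lemma K_hbar_eq_suminf:
  "K_hbar deg W Kk I2 hbar P = (\<lambda>m. \<Sum>k. nu I2 (kappa_hat deg Kk
     (((\<lambda>X m. (\<i> * of_real hbar) * bvlap deg W (nu I2 (kappa_hat deg Kk X)) m) ^^ k) P)) m)"
  unfolding K_hbar_def pert_homotopy_def by simp

locale bv_homotopy =
  fixes deg :: "'i::{finite,linorder} \<Rightarrow> int"
    and W Kk :: "real^('i::{finite,linorder})^('i::{finite,linorder})"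
    and I2 :: "'i set"
  assumes w_deg: "\<forall>i j. W $ i $ j \<noteq> 0 \<longrightarrow> deg i + deg j = 1"
    and w_sym: "transpose W = W"
    and w_nondeg: "invertible W"
    and split_w: "\<forall>i j. W $ i $ j \<noteq> 0 \<longrightarrow> (i \<in> I2 \<longleftrightarrow> j \<in> I2)"
    and k_deg: "\<forall>i j. Kk $ i $ j \<noteq> 0 \<longrightarrow> deg i + 1 = deg j"
    and k_sq: "Kk ** Kk = 0"
    and k_iota: "\<forall>i j. j \<notin> I2 \<longrightarrow> Kk $ i $ j = 0"
    and k_pi: "\<forall>i j. i \<notin> I2 \<longrightarrow> Kk $ i $ j = 0"
begin

lemma matrix_inv_parity:
  assumes "matrix_inv W $ i $ j \<noteq> 0"
  shows "odd (deg i) \<longleftrightarrow> even (deg j)"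
proof -
  let ?e = "\<lambda>i. if odd (deg i) then -1 else 1 :: real"
  have "?e i * ?e j = -1"
  proof (rule matrix_inv_sign_pattern[OF w_nondeg _ _ _ assms])
    fix i j
    assume "W $ i $ j \<noteq> 0"
    then have "odd (deg i + deg j)"
      using w_deg by simp
    then show "?e i * ?e j = -1"
      by auto
  qed simp_all
  then show ?thesis
    by (auto split: if_splits)
qed

lemma matrix_inv_block:
  assumes "matrix_inv W $ i $ j \<noteq> 0" and "j \<in> I2"
  shows "i \<in> I2"
proof -
  let ?e = "\<lambda>i. if i \<in> I2 then 1 else -1 :: real"
  have "?e i * ?e j = 1"
    by (rule matrix_inv_sign_pattern[OF w_nondeg _ _ _ assms(1)]) (use split_w in auto)
  then show ?thesis
    using assms(2) by (auto split: if_splits)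
qed

lemma matrix_inv_symmetric: "matrix_inv W $ j $ i = matrix_inv W $ i $ j"
  using arg_cong[OF transpose_matrix_inv_symmetric[OF w_nondeg w_sym], of "\<lambda>A. A $ i $ j"]
  by (simp add: transpose_def)

lemma eta_eq_sum:
  "eta deg W Kk I2 Y m = (\<Sum>i\<in>UNIV. \<Sum>a\<in>UNIV. \<Sum>j\<in>UNIV.
     of_real (matrix_inv W $ i $ j * Kk $ a $ j) * sderiv deg i (sderiv deg a Y) m)"
proof -
  define F where "F i a j = of_real (matrix_inv W $ i $ j * Kk $ a $ j) * sderiv deg i (sderiv deg a Y) m" for i a j
  have F0: "F i a j = 0" if "\<not> (i \<in> I2 \<and> a \<in> I2 \<and> j \<in> I2)" for i a j
  proof -
    have "Kk $ a $ j = 0 \<or> matrix_inv W $ i $ j = 0"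
      using that k_iota k_pi matrix_inv_block by blast
    then show ?thesis
      unfolding F_def by auto
  qed
  have "eta deg W Kk I2 Y m = (\<Sum>i\<in>I2. \<Sum>a\<in>I2. \<Sum>j\<in>I2. F i a j)"
    unfolding eta_def hmat_def F_def by (simp add: sum_distrib_right)
  also have "\<dots> = (\<Sum>i\<in>UNIV. \<Sum>a\<in>UNIV. \<Sum>j\<in>UNIV. F i a j)"
  proof -
    have "(\<Sum>j\<in>UNIV. F i a j) = (\<Sum>j\<in>I2. F i a j)" for i a
      by (rule sum.mono_neutral_right) (auto simp: F0)
    moreover have "(\<Sum>a\<in>UNIV. \<Sum>j\<in>I2. F i a j) = (\<Sum>a\<in>I2. \<Sum>j\<in>I2. F i a j)" for i
      by (rule sum.mono_neutral_right) (auto simp: F0)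
    moreover have "(\<Sum>i\<in>UNIV. \<Sum>a\<in>I2. \<Sum>j\<in>I2. F i a j) = (\<Sum>i\<in>I2. \<Sum>a\<in>I2. \<Sum>j\<in>I2. F i a j)"
      by (rule sum.mono_neutral_right) (auto simp: F0)
    ultimately show ?thesis
      by simp
  qed
  finally show ?thesis
    unfolding F_def .
qed

lemma bvlap_kappa_hat_cross_terms:
  "(\<Sum>i\<in>UNIV. \<Sum>j\<in>UNIV. \<Sum>a\<in>UNIV. of_real (matrix_inv W $ i $ j) * grade_sign deg j
      * of_real (Kk $ a $ i) * sderiv deg a (sderiv deg j Y) m)
   = (\<Sum>i\<in>UNIV. \<Sum>j\<in>UNIV. \<Sum>a\<in>UNIV. of_real (matrix_inv W $ i $ j)
      * of_real (Kk $ a $ j) * sderiv deg i (sderiv deg a Y) m)"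
  (is "?B = ?A")
proof -
  let ?w = "\<lambda>i j. complex_of_real (matrix_inv W $ i $ j)"
  let ?k = "\<lambda>a b. complex_of_real (Kk $ a $ b)"
  let ?e = "grade_sign deg"
  have "?B = (\<Sum>i\<in>UNIV. \<Sum>j\<in>UNIV. \<Sum>a\<in>UNIV.
      ?w j i * ?e i * ?k a j * sderiv deg a (sderiv deg i Y) m)"
    by (rule sum.swap)
  also have "\<dots> = ?A"
  proof (intro sum.cong refl)
    fix i j a
    show "?w j i * ?e i * ?k a j * sderiv deg a (sderiv deg i Y) m
        = ?w i j * ?k a j * sderiv deg i (sderiv deg a Y) m"
    proof (cases "matrix_inv W $ i $ j = 0 \<or> Kk $ a $ j = 0")
      case False
      then have "odd (deg i) \<longleftrightarrow> even (deg j)" and a_j: "deg a + 1 = deg j"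
        using matrix_inv_parity k_deg by blast+
      moreover have "odd (deg j) \<longleftrightarrow> even (deg a)"
        by (simp flip: a_j)
      ultimately have "odd (deg a) \<longleftrightarrow> odd (deg i)"
        by blast
      then have sign: "?e i * parity_sign deg a i = 1"
        unfolding grade_sign_def parity_sign_def by simp
      have "?w j i * ?e i * ?k a j * sderiv deg a (sderiv deg i Y) m
          = ?w i j * ?k a j * (?e i * parity_sign deg a i) * sderiv deg i (sderiv deg a Y) m"
        by (simp add: sderiv_commute[of deg a i] matrix_inv_symmetric[of j i] mult_ac)
      then show ?thesis
        unfolding sign by simp
    qed (use matrix_inv_symmetric[of j i] in auto)
  qed
  finally show ?thesis .
qed

lemma bvlap_kappa_hat_commuted_terms:
  "(\<Sum>i\<in>UNIV. \<Sum>j\<in>UNIV. of_real (matrix_inv W $ i $ j) * grade_sign deg j * grade_sign deg i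
      * kappa_hat deg Kk (sderiv deg i (sderiv deg j Y)) m)
   = - 2 * kappa_hat deg Kk (bvlap deg W Y) m"
proof -
  let ?w = "\<lambda>i j. complex_of_real (matrix_inv W $ i $ j)"
  have "?w i j * grade_sign deg j * grade_sign deg i = - ?w i j" for i j
    using matrix_inv_parity[of i j] by (cases "matrix_inv W $ i $ j = 0") (auto simp: grade_sign_def)
  then have "(\<Sum>i\<in>UNIV. \<Sum>j\<in>UNIV. ?w i j * grade_sign deg j * grade_sign deg i
      * kappa_hat deg Kk (sderiv deg i (sderiv deg j Y)) m)
    = - (\<Sum>i\<in>UNIV. \<Sum>j\<in>UNIV. ?w i j * kappa_hat deg Kk (sderiv deg i (sderiv deg j Y)) m)"
    by (simp add: sum_negf)
  also have "\<dots> = - 2 * kappa_hat deg Kk (bvlap deg W Y) m"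
    unfolding bvlap_def linop_mult[OF linop_kappa_hat] linop_sum[OF linop_kappa_hat finite]
    by simp
  finally show ?thesis .
qed

lemma bvlap_kappa_hat:
  "bvlap deg W (kappa_hat deg Kk Y) m = eta deg W Kk I2 Y m - kappa_hat deg Kk (bvlap deg W Y) m"
proof -
  let ?w = "\<lambda>i j. complex_of_real (matrix_inv W $ i $ j)"
  let ?k = "\<lambda>a b. complex_of_real (Kk $ a $ b)"
  let ?e = "grade_sign deg"
  have dk: "sderiv deg j (kappa_hat deg Kk Z) = (\<lambda>m. (\<Sum>a\<in>UNIV. ?k a j * sderiv deg a Z m)
      + ?e j * kappa_hat deg Kk (sderiv deg j Z) m)" for j Z
    by (rule ext) (rule sderiv_kappa_hat[OF k_deg])
  define A where "A = (\<Sum>i\<in>UNIV. \<Sum>j\<in>UNIV. \<Sum>a\<in>UNIV.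
      ?w i j * ?k a j * sderiv deg i (sderiv deg a Y) m)"
  define B where "B = (\<Sum>i\<in>UNIV. \<Sum>j\<in>UNIV. \<Sum>a\<in>UNIV.
      ?w i j * ?e j * ?k a i * sderiv deg a (sderiv deg j Y) m)"
  define C where "C = (\<Sum>i\<in>UNIV. \<Sum>j\<in>UNIV.
      ?w i j * ?e j * ?e i * kappa_hat deg Kk (sderiv deg i (sderiv deg j Y)) m)"
  have "bvlap deg W (kappa_hat deg Kk Y) m = 1/2 * (A + B + C)"
    unfolding bvlap_def A_def B_def C_def
    by (simp only: dk sderiv_xmul_linear) (simp add: sum.distrib sum_distrib_left algebra_simps)
  moreover have "B = A"
    unfolding A_def B_def by (rule bvlap_kappa_hat_cross_terms)
  moreover have "C = - 2 * kappa_hat deg Kk (bvlap deg W Y) m"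
    unfolding C_def by (rule bvlap_kappa_hat_commuted_terms)
  moreover have "A = eta deg W Kk I2 Y m"
    unfolding A_def eta_eq_sum of_real_mult
    by (rule sum.cong[OF refl], rule sum.swap)
  ultimately have "2 * (bvlap deg W (kappa_hat deg Kk Y) m + kappa_hat deg Kk (bvlap deg W Y) m)
      = 2 * eta deg W Kk I2 Y m"
    by (simp add: field_simps)
  then show ?thesis
    by (subst (asm) mult_left_cancel) (simp_all add: eq_diff_eq)
qed

lemma homN_kappa_hat: "homN I2 n Y \<Longrightarrow> homN I2 n (kappa_hat deg Kk Y)"
  unfolding homN_def
proof (intro allI impI)
  fix m
  assume hom: "\<forall>m. Y m \<noteq> 0 \<longrightarrow> Ndeg I2 m = n" and "kappa_hat deg Kk Y m \<noteq> 0"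
  then obtain a where "(\<Sum>b\<in>UNIV. of_real (Kk $ a $ b) * xmul deg b (sderiv deg a Y) m) \<noteq> 0"
    unfolding kappa_hat_def by (auto elim: sum.not_neutral_contains_not_neutral)
  then obtain b where "of_real (Kk $ a $ b) * xmul deg b (sderiv deg a Y) m \<noteq> 0"
    by (auto elim: sum.not_neutral_contains_not_neutral)
  then have "Kk $ a $ b \<noteq> 0" and nz: "xmul deg b (sderiv deg a Y) m \<noteq> 0"
    by auto
  then have ab: "a \<in> I2" "b \<in> I2"
    using k_iota k_pi by blast+
  define m' where "m' = m(b := m b - 1)"
  have mb: "1 \<le> m b" and "sderiv deg a Y m' \<noteq> 0"
    using xmul_nonzero_imp[OF nz] unfolding m'_def by auto
  then have "Ndeg I2 (m'(a := m' a + 1)) = n"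
    using hom sderiv_nonzero_imp[of deg a Y m'] by blast
  moreover have "Ndeg I2 m' + 1 = Ndeg I2 m"
    unfolding m'_def by (rule Ndeg_fun_upd_decr[where m = m, OF ab(2) mb])
  ultimately show "Ndeg I2 m = n"
    using Ndeg_fun_upd_incr[OF ab(1), of m'] by simp
qed

lemma nu_kappa_hat_funpow_homN:
  assumes "homN I2 n P"
  shows "nu I2 (kappa_hat deg Kk (((\<lambda>X m. c * bvlap deg W (nu I2 (kappa_hat deg Kk X)) m) ^^ k) P))
       = (\<lambda>m. c ^ k / (\<Prod>l\<le>k. of_nat (n - 2 * l)) * kappa_hat deg Kk ((eta deg W Kk I2 ^^ k) P) m)"
proof (induction k)
  case 0
  show ?case
    using nu_homN[OF homN_kappa_hat[OF assms]] by simp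
next
  case (Suc k)
  let ?G = "\<lambda>X m. c * bvlap deg W (nu I2 (kappa_hat deg Kk X)) m"
  let ?Q = "(eta deg W Kk I2 ^^ k) P"
  let ?e = "c ^ k / (\<Prod>l\<le>k. of_nat (n - 2 * l))"
  have "(?G ^^ Suc k) P = (\<lambda>m. c * bvlap deg W (\<lambda>m. ?e * kappa_hat deg Kk ?Q m) m)"
    by (simp only: funpow.simps o_apply Suc.IH)
  also have "\<dots> = (\<lambda>m. (c * ?e) * (eta deg W Kk I2 ?Q m - kappa_hat deg Kk (bvlap deg W ?Q) m))"
    by (simp only: linop_mult[OF linop_bvlap] bvlap_kappa_hat mult.assoc)
  finally have "kappa_hat deg Kk ((?G ^^ Suc k) P) = (\<lambda>m. (c * ?e)
      * (kappa_hat deg Kk (eta deg W Kk I2 ?Q) m - kappa_hat deg Kk (kappa_hat deg Kk (bvlap deg W ?Q)) m))"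
    by (simp only: linop_mult[OF linop_kappa_hat] linop_diff[OF linop_kappa_hat])
  also have "\<dots> = (\<lambda>m. (c * ?e) * kappa_hat deg Kk (eta deg W Kk I2 ?Q) m)"
    by (simp add: kappa_hat_square[OF k_deg k_sq])
  finally have K: "kappa_hat deg Kk ((?G ^^ Suc k) P) = \<dots>" .
  have "homN I2 (n - 2 * Suc k) (kappa_hat deg Kk (eta deg W Kk I2 ?Q))"
    using homN_kappa_hat[OF homN_eta[OF homN_eta_funpow[OF assms]]] by (simp add: diff_diff_add)
  then have "nu I2 (kappa_hat deg Kk ((?G ^^ Suc k) P))
      = (\<lambda>m. (c * ?e) * kappa_hat deg Kk (eta deg W Kk I2 ?Q) m / of_nat (n - 2 * Suc k))"
    by (simp only: K nu_homN[OF homN_scale])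
  then show ?case
    by (simp add: prod.atMost_Suc mult_ac)
qed

lemma K_hbar_homN:
  assumes "homN I2 n P"
  shows "K_hbar deg W Kk I2 hbar P = (\<lambda>m. \<Sum>j\<le>(n - 1) div 2.
     (\<i> * of_real hbar) ^ j / (\<Prod>l\<le>j. of_nat (n - 2 * l)) * kappa_hat deg Kk ((eta deg W Kk I2 ^^ j) P) m)"
proof
  fix m
  let ?t = "\<lambda>j. (\<i> * of_real hbar) ^ j / (\<Prod>l\<le>j. of_nat (n - 2 * l))
    * kappa_hat deg Kk ((eta deg W Kk I2 ^^ j) P) m"
  (* For 2j >= n the denominator contains the factor n - 2j = 0 (truncated subtraction), so the
     term is 0 by x / 0 = 0, just as the corresponding term of the series, where nu vanishes on
     degree 0.  For n = 0 the whole sum is therefore 0. *)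
  have "?t j = 0" if "j \<notin> {..(n - 1) div 2}" for j
  proof -
    have "n \<le> 2 * j"
      using that by auto
    then have "(\<Prod>l\<le>j. of_nat (n - 2 * l) :: complex) = 0"
      by (intro prod_zero) auto
    then show ?thesis
      by simp
  qed
  then have "(\<Sum>j. ?t j) = (\<Sum>j\<le>(n - 1) div 2. ?t j)"
    by (intro suminf_finite) auto
  then show "K_hbar deg W Kk I2 hbar P m = (\<Sum>j\<le>(n - 1) div 2. ?t j)"
    by (simp add: K_hbar_eq_suminf nu_kappa_hat_funpow_homN[OF assms])
qed

lemma K_hbar_eq_resummed:
  assumes "finite {m. P m \<noteq> 0}"
  shows "K_hbar deg W Kk I2 hbar P = (\<lambda>m. \<Sum>j. kappa_hat deg Kk (nu I2
     (((\<lambda>X m'. (\<i> * of_real hbar) * eta deg W Kk I2 (nu I2 X) m') ^^ j) P)) m)"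
proof -
  let ?G = "\<lambda>X m. (\<i> * of_real hbar) * bvlap deg W (nu I2 (kappa_hat deg Kk X)) m"
  let ?H = "\<lambda>X m'. (\<i> * of_real hbar) * eta deg W Kk I2 (nu I2 X) m'"
  have "nu I2 (kappa_hat deg Kk ((?G ^^ k) P)) = kappa_hat deg Kk (nu I2 ((?H ^^ k) P))" for k
  proof (rule linop_eq_if_eq_on_homN[of _ _ I2, OF _ _ _ assms])
    show "linop (\<lambda>X. nu I2 (kappa_hat deg Kk ((?G ^^ k) X)))"
      by (rule linop_comp[OF linop_nu linop_comp[OF linop_kappa_hat linop_funpow[OF
            linop_scale[OF linop_comp[OF linop_bvlap linop_comp[OF linop_nu linop_kappa_hat]]]]]])
    show "linop (\<lambda>X. kappa_hat deg Kk (nu I2 ((?H ^^ k) X)))"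
      by (rule linop_comp[OF linop_kappa_hat linop_comp[OF linop_nu linop_funpow[OF
            linop_scale[OF linop_comp[OF linop_eta linop_nu]]]]])
  qed (simp add: nu_kappa_hat_funpow_homN kappa_hat_nu_funpow_homN)
  then show ?thesis
    by (simp add: K_hbar_eq_suminf)
qed

end

theorem mainTheorem2:
  fixes deg :: "'i::{finite,linorder} \<Rightarrow> int"
    and D W Kk :: "real^('i::{finite,linorder})^('i::{finite,linorder})"
    and I2 :: "'i set"
    and hbar :: real
  assumes d_deg: "\<forall>i j. D $ i $ j \<noteq> 0 \<longrightarrow> deg i = deg j + 1"
    and d_sq: "D ** D = 0"
    and w_deg: "\<forall>i j. W $ i $ j \<noteq> 0 \<longrightarrow> deg i + deg j = 1"
    and w_sym: "transpose W = W"
    and w_nondeg: "invertible W"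
    and w_d: "\<exists>\<sigma>::int \<Rightarrow> int \<Rightarrow> real. (\<forall>a b. \<sigma> a b = 1 \<or> \<sigma> a b = -1) \<and>
              (\<forall>i j. omega W (D *v ebasis i) (ebasis j)
                     = \<sigma> (deg i) (deg j) * omega W (ebasis i) (D *v ebasis j))"
    and split_d: "\<forall>i j. D $ i $ j \<noteq> 0 \<longrightarrow> (i \<in> I2 \<longleftrightarrow> j \<in> I2)"
    and split_w: "\<forall>i j. W $ i $ j \<noteq> 0 \<longrightarrow> (i \<in> I2 \<longleftrightarrow> j \<in> I2)"
    and acyclic: "\<forall>v. (\<forall>i. i \<notin> I2 \<longrightarrow> v $ i = 0) \<longrightarrow> D *v v = 0 \<longrightarrow>
                   (\<exists>u. (\<forall>i. i \<notin> I2 \<longrightarrow> u $ i = 0) \<and> v = D *v u)"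
    and k_deg: "\<forall>i j. Kk $ i $ j \<noteq> 0 \<longrightarrow> deg i + 1 = deg j"
    and k_htpy: "D ** Kk + Kk ** D = mat 1 - (\<chi> i j. if i = j \<and> i \<notin> I2 then 1 else 0)"
    and k_sq: "Kk ** Kk = 0"
    and k_iota: "\<forall>i j. j \<notin> I2 \<longrightarrow> Kk $ i $ j = 0"
    and k_pi: "\<forall>i j. i \<notin> I2 \<longrightarrow> Kk $ i $ j = 0"
    and k_w: "\<exists>\<sigma>::int \<Rightarrow> int \<Rightarrow> real. (\<forall>a b. \<sigma> a b = 1 \<or> \<sigma> a b = -1) \<and>
              (\<forall>i j. omega W (ebasis i) (Kk *v ebasis j)
                     = \<sigma> (deg i) (deg j) * omega W (Kk *v ebasis i) (ebasis j))"
  shows "(\<forall>P n. spoly deg P \<and> homN I2 n P \<and> 1 \<le> n \<longrightarrow>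
            K_hbar deg W Kk I2 hbar P =
              (\<lambda>m. \<Sum>j\<le>(n - 1) div 2.
                 (\<i> * of_real hbar) ^ j / (\<Prod>l\<le>j. of_nat (n - 2 * l))
                 * kappa_hat deg Kk (((eta deg W Kk I2) ^^ j) P) m))
       \<and> (\<forall>P. spoly deg P \<and> homN I2 0 P \<longrightarrow> K_hbar deg W Kk I2 hbar P = (\<lambda>m. 0))
       \<and> (\<forall>P. spoly deg P \<longrightarrow>
            K_hbar deg W Kk I2 hbar P =
              (\<lambda>m. \<Sum>j. kappa_hat deg Kk (nu I2
                 (((\<lambda>X m'. (\<i> * of_real hbar) * eta deg W Kk I2 (nu I2 X) m') ^^ j) P)) m))"
proof -
  (* The hypotheses involving D only make (i, p, K) a strong deformation retract;
     the formula for K_hbar uses just the ones on W and Kk. *)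
  interpret bv_homotopy deg W Kk I2
    using w_deg w_sym w_nondeg split_w k_deg k_sq k_iota k_pi by unfold_locales
  show ?thesis
  proof (intro conjI allI impI)
    fix P n
    assume "spoly deg P \<and> homN I2 n P \<and> 1 \<le> n"
    then show "K_hbar deg W Kk I2 hbar P = (\<lambda>m. \<Sum>j\<le>(n - 1) div 2.
        (\<i> * of_real hbar) ^ j / (\<Prod>l\<le>j. of_nat (n - 2 * l))
        * kappa_hat deg Kk (((eta deg W Kk I2) ^^ j) P) m)"
      using K_hbar_homN by blast
  next
    fix P
    assume "spoly deg P \<and> homN I2 0 P"
    then show "K_hbar deg W Kk I2 hbar P = (\<lambda>m. 0)"
      using K_hbar_homN[of 0 P] by simp
  next
    fix P
    assume "spoly deg P"
    then show "K_hbar deg W Kk I2 hbar P = (\<lambda>m. \<Sum>j. kappa_hat deg Kk (nu I2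
        (((\<lambda>X m'. (\<i> * of_real hbar) * eta deg W Kk I2 (nu I2 X) m') ^^ j) P)) m)"
      unfolding spoly_def by (blast intro: K_hbar_eq_resummed)
  qed
qed

end
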